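(* Let $n,g,k$ be integers with $1\leq g\leq \left\lfloor \frac{n-k-2}{2}\right\rfloor$. Let $G^k_n$ be the graph obtained from three disjoint cliques $K_{n-k-g}$, $K_{k-1}$, $K_{g+1}$ by adding all edges between $V(K_{n-k-g})$ and $V(K_{k-1})$ and all edges between $V(K_{g+1})$ and $V(K_{k-1})$. Then $\kappa^g(G^k_n)=k-1$.
   Context: For a connected graph $G=(V,E)$ and integer $g\ge0$: a set $F\subseteq V$ is a $g$-good-neighbor faulty set if $|N(v)\cap (V-F)|\geq g$ for every $v\in V-F$; a $g$-good-neighbor cut is such an $F$ with $G-F$ disconnected; $\kappa^g(G)$ is the minimum cardinality of a $g$-good-neighbor cut. *)

theory Defs
  imports Main
begin

text \<open>Simple graphs are given by a vertex set V and an edge predicate E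
  (assumed symmetric and irreflexive on V where relevant).\<close>

definition nbrs :: "('a \<Rightarrow> 'a \<Rightarrow> bool) \<Rightarrow> 'a set \<Rightarrow> 'a \<Rightarrow> 'a set" where
  "nbrs E V v = {u \<in> V. E v u}"

definition connected_on :: "('a \<Rightarrow> 'a \<Rightarrow> bool) \<Rightarrow> 'a set \<Rightarrow> bool" where
  "connected_on E S \<longleftrightarrow>
     (\<forall>u\<in>S. \<forall>v\<in>S. (u, v) \<in> {(x, y). x \<in> S \<and> y \<in> S \<and> E x y}\<^sup>*)"

definition good_neighbor_faulty :: "'a set \<Rightarrow> ('a \<Rightarrow> 'a \<Rightarrow> bool) \<Rightarrow> nat \<Rightarrow> 'a set \<Rightarrow> bool" where
  "good_neighbor_faulty V E g F \<longleftrightarrow>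
     F \<subseteq> V \<and> (\<forall>v \<in> V - F. card (nbrs E V v \<inter> (V - F)) \<ge> g)"

definition good_neighbor_cut :: "'a set \<Rightarrow> ('a \<Rightarrow> 'a \<Rightarrow> bool) \<Rightarrow> nat \<Rightarrow> 'a set \<Rightarrow> bool" where
  "good_neighbor_cut V E g F \<longleftrightarrow>
     good_neighbor_faulty V E g F \<and> \<not> connected_on E (V - F)"

definition kappa_g :: "'a set \<Rightarrow> ('a \<Rightarrow> 'a \<Rightarrow> bool) \<Rightarrow> nat \<Rightarrow> nat" where
  "kappa_g V E g = Min {card F | F. good_neighbor_cut V E g F}"

text \<open>The graph G^k_n on vertex set {0..<n}: A = {0..<n-k-g} (clique K_{n-k-g}),
  B = {n-k-g..<n-g-1} (clique K_{k-1}), C = {n-g-1..<n} (clique K_{g+1});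
  all A-B and C-B edges are added.\<close>
definition Gkn_V :: "nat \<Rightarrow> nat set" where
  "Gkn_V n = {0..<n}"

definition Gkn_E :: "nat \<Rightarrow> nat \<Rightarrow> nat \<Rightarrow> nat \<Rightarrow> nat \<Rightarrow> bool" where
  "Gkn_E n g k u v \<longleftrightarrow> u \<noteq> v \<and> u < n \<and> v < n \<and>
     (let A = {0..<n-k-g}; B = {n-k-g..<n-g-1}; C = {n-g-1..<n} in
       (u \<in> A \<and> v \<in> A) \<or> (u \<in> C \<and> v \<in> C) \<or> u \<in> B \<or> v \<in> B)"

end

theory Submission
  imports Defs
begin

text \<open>The middle clique B = K_{k-1} is joined to every other vertex. Deleting it leaves the
  cliques K_{n-k-g} and K_{g+1} with no edges between them, and each of their vertices keeps at
  least g neighbours, so B is a g-good-neighbor cut of size k - 1. Conversely, any surviving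
  vertex of B would connect all surviving vertices, so every cut contains B.\<close>

lemma kappa_g_eqI:
  assumes "finite V"
    and "good_neighbor_cut V E g F" "card F = c"
    and "\<And>F'. good_neighbor_cut V E g F' \<Longrightarrow> c \<le> card F'"
  shows "kappa_g V E g = c"
proof -
  have "{card F | F. good_neighbor_cut V E g F} \<subseteq> card ` Pow V"
    unfolding good_neighbor_cut_def good_neighbor_faulty_def by blast
  then have "finite {card F | F. good_neighbor_cut V E g F}"
    using \<open>finite V\<close> finite_subset by blast
  then show ?thesis
    unfolding kappa_g_def using assms(2-4) by (intro Min_eqI) auto
qed

lemma connected_on_universal_vertex:
  assumes "b \<in> S" and "\<And>u. u \<in> S \<Longrightarrow> u \<noteq> b \<Longrightarrow> E u b \<and> E b u"
  shows "connected_on E S"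
  unfolding connected_on_def
proof (intro ballI)
  fix u v assume "u \<in> S" "v \<in> S"
  let ?R = "{(x, y). x \<in> S \<and> y \<in> S \<and> E x y}"
  have "(u, b) \<in> ?R\<^sup>*" "(b, v) \<in> ?R\<^sup>*"
    using assms \<open>u \<in> S\<close> \<open>v \<in> S\<close> by (auto intro: r_into_rtrancl)
  then show "(u, v) \<in> ?R\<^sup>*" by (rule rtrancl_trans)
qed

lemma not_connected_on_separated:
  assumes "S \<subseteq> T" "u \<in> S" "v \<in> T - S"
    and closed: "\<And>x y. x \<in> S \<Longrightarrow> y \<in> T \<Longrightarrow> E x y \<Longrightarrow> y \<in> S"
  shows "\<not> connected_on E T"
proof
  let ?R = "{(x, y). x \<in> T \<and> y \<in> T \<and> E x y}"
  have "y \<in> S" if "(u, y) \<in> ?R\<^sup>*" for y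
    using that by induction (use \<open>u \<in> S\<close> closed in auto)
  moreover assume "connected_on E T"
  then have "(u, v) \<in> ?R\<^sup>*"
    using assms(1-3) unfolding connected_on_def by blast
  ultimately show False using \<open>v \<in> T - S\<close> by blast
qed

lemma card_nbrs_ge_clique:
  assumes "finite V" "v \<in> K" "K \<subseteq> W" "W \<subseteq> V"
    and "\<And>u. u \<in> K \<Longrightarrow> u \<noteq> v \<Longrightarrow> E v u"
  shows "card K - 1 \<le> card (nbrs E V v \<inter> W)"
proof -
  have "K - {v} \<subseteq> nbrs E V v \<inter> W"
    using assms(3-5) unfolding nbrs_def by auto
  then have "card (K - {v}) \<le> card (nbrs E V v \<inter> W)"
    using \<open>finite V\<close> by (intro card_mono) (auto simp: nbrs_def)
  then show ?thesis using \<open>v \<in> K\<close> by simp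
qed

lemma Gkn_E_iff:
  "Gkn_E n g k u v \<longleftrightarrow> u \<noteq> v \<and> u < n \<and> v < n \<and>
     ((u < n - k - g \<and> v < n - k - g) \<or> (n - g - 1 \<le> u \<and> n - g - 1 \<le> v)
      \<or> u \<in> {n-k-g..<n-g-1} \<or> v \<in> {n-k-g..<n-g-1})"
  unfolding Gkn_E_def Let_def by auto

lemma Gkn_middle_universal:
  assumes "b \<in> {n-k-g..<n-g-1}" "u < n" "u \<noteq> b"
  shows "Gkn_E n g k u b \<and> Gkn_E n g k b u"
  using assms unfolding Gkn_E_iff by auto

lemma Gkn_middle_good_neighbor_cut:
  assumes "1 \<le> k" "g + 2 \<le> n - k - g"
  shows "good_neighbor_cut (Gkn_V n) (Gkn_E n g k) g {n-k-g..<n-g-1}"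
proof -
  let ?B = "{n-k-g..<n-g-1}" and ?W = "{0..<n} - {n-k-g..<n-g-1}"
  have good: "g \<le> card (nbrs (Gkn_E n g k) {0..<n} v \<inter> ?W)" if "v \<in> ?W" for v
  proof (cases "v < n - k - g")
    case True
    have "card {0..<n-k-g} - 1 \<le> card (nbrs (Gkn_E n g k) {0..<n} v \<inter> ?W)"
      using True by (intro card_nbrs_ge_clique) (auto simp: Gkn_E_iff)
    then show ?thesis using assms by simp
  next
    case False
    with that have "v \<in> {n-g-1..<n}" by auto
    then have "card {n-g-1..<n} - 1 \<le> card (nbrs (Gkn_E n g k) {0..<n} v \<inter> ?W)"
      using assms by (intro card_nbrs_ge_clique) (auto simp: Gkn_E_iff)
    then show ?thesis using assms by simp
  qed
  have "\<not> connected_on (Gkn_E n g k) ?W"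
    using assms by (intro not_connected_on_separated[where S = "{0..<n-k-g}" and u = 0
          and v = "n - 1"]) (auto simp: Gkn_E_iff)
  with good show ?thesis
    unfolding good_neighbor_cut_def good_neighbor_faulty_def Gkn_V_def by auto
qed

lemma Gkn_good_neighbor_cut_contains_middle:
  assumes "good_neighbor_cut (Gkn_V n) (Gkn_E n g k) g F"
  shows "{n-k-g..<n-g-1} \<subseteq> F"
proof
  fix b assume b: "b \<in> {n-k-g..<n-g-1}"
  show "b \<in> F"
  proof (rule ccontr)
    assume "b \<notin> F"
    with b have "connected_on (Gkn_E n g k) (Gkn_V n - F)"
      by (intro connected_on_universal_vertex[where b = b])
        (auto simp: Gkn_V_def Gkn_middle_universal)
    with assms show False unfolding good_neighbor_cut_def by blast
  qed
qed

theorem lemma4p4: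
  fixes n g k :: nat
  assumes "1 \<le> k"
    and "1 \<le> g"
    and "g \<le> (n - k - 2) div 2"
  shows "kappa_g (Gkn_V n) (Gkn_E n g k) g = k - 1"
proof (rule kappa_g_eqI)
  have sizes: "g + 2 \<le> n - k - g" "n - g - 1 - (n - k - g) = k - 1"
    using assms by auto
  show "finite (Gkn_V n)" unfolding Gkn_V_def by simp
  show "good_neighbor_cut (Gkn_V n) (Gkn_E n g k) g {n-k-g..<n-g-1}"
    using assms(1) sizes(1) by (rule Gkn_middle_good_neighbor_cut)
  show "card {n-k-g..<n-g-1} = k - 1" using sizes(2) by simp
  fix F assume cut: "good_neighbor_cut (Gkn_V n) (Gkn_E n g k) g F"
  then have "finite F"
    unfolding good_neighbor_cut_def good_neighbor_faulty_def Gkn_V_def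
    using finite_subset by blast
  with Gkn_good_neighbor_cut_contains_middle[OF cut]
  have "card {n-k-g..<n-g-1} \<le> card F" by (rule card_mono[rotated])
  then show "k - 1 \<le> card F" using sizes(2) by simp
qed

end
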